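(* Let $L\subseteq\Sigma^*$ be a regular language with $\kappa(L)=n$. If $n=1$ (and $L$ is closed), then $\kappa(L^R)=1$. If $n\ge 2$: 1. if $L$ is prefix-closed, $\kappa(L^R)\le 2^{n-1}$, and this is tight over alphabets with $|\Sigma|\ge 2$; 2. if $L$ is suffix-closed, $\kappa(L^R)\le 2^{n-1}+1$, and this is tight over alphabets with $|\Sigma|\ge 3$; 3. if $L$ is factor-closed, $\kappa(L^R)\le 2^{n-2}+1$, and this is tight over alphabets with $|\Sigma|\ge 3$; 4. if $L$ is subword-closed, $\kappa(L^R)\le 2^{n-2}+1$, and this is tight over alphabets with $|\Sigma|\ge 2n$. Here "tight" means that for every $n\ge 2$ there is a language of the given class over such an alphabet with $\kappa(L)=n$ attaining the bound.
   Context: $\Sigma$ is a finite non-empty alphabet. $L_w=\{x\mid wx\in L\}$ is the left quotient of $L$ by $w$, and $\kappa(L)$ is the number of distinct quotients of $L$ (its state complexity). $L^R=\{w^R\mid w\in L\}$, where $w^R$ is the reversal of $w$. A language is prefix-closed (suffix-, factor-, subword-closed) if it contains every prefix (suffix, factor, subword) of each of its words, where subword means scattered subsequence. *)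

theory Defs
  imports Main "HOL-Library.Sublist" "HOL-Library.Cardinality"
begin

text \<open>Languages over a finite non-empty alphabet, given by a type of class finite
  (types are non-empty).\<close>

definition lquot :: "'a list set \<Rightarrow> 'a list \<Rightarrow> 'a list set" where
  "lquot L w = {x. w @ x \<in> L}"

text \<open>State complexity: number of distinct left quotients.\<close>
definition kappa :: "'a list set \<Rightarrow> nat" where
  "kappa L = card {lquot L w | w. True}"

definition lrev :: "'a list set \<Rightarrow> 'a list set" where
  "lrev L = rev ` L"

definition regular_lang :: "('a::finite) list set \<Rightarrow> bool" where
  "regular_lang L \<longleftrightarrow> (\<exists>(Q::nat set) (\<delta>::nat \<Rightarrow> 'a \<Rightarrow> nat) q0 F.
      finite Q \<and> q0 \<in> Q \<and> (\<forall>q\<in>Q. \<forall>a. \<delta> q a \<in> Q) \<and> F \<subseteq> Q \<and>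
      L = {w. foldl \<delta> q0 w \<in> F})"

definition prefix_closed :: "'a list set \<Rightarrow> bool" where
  "prefix_closed L \<longleftrightarrow> (\<forall>w\<in>L. \<forall>v. prefix v w \<longrightarrow> v \<in> L)"

definition suffix_closed :: "'a list set \<Rightarrow> bool" where
  "suffix_closed L \<longleftrightarrow> (\<forall>w\<in>L. \<forall>v. suffix v w \<longrightarrow> v \<in> L)"

definition factor_closed :: "'a list set \<Rightarrow> bool" where
  "factor_closed L \<longleftrightarrow> (\<forall>w\<in>L. \<forall>v. sublist v w \<longrightarrow> v \<in> L)"

definition subword_closed :: "'a list set \<Rightarrow> bool" where
  "subword_closed L \<longleftrightarrow> (\<forall>w\<in>L. \<forall>v. subseq v w \<longrightarrow> v \<in> L)"

end

theory Submission
  imports Defs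
begin

(* The quotient of lrev L by w depends
   only on which quotients of L contain rev w, so kappa (lrev L) is bounded by the number of
   possible such "containment profiles".  The closure properties restrict the profiles: for
   prefix-closed L the empty quotient contains nothing, and for suffix-closed L every quotient
   is contained in L, so a profile is either empty or contains L.  Counting gives the upper
   bounds 2^(n-1), 2^(n-1) + 1 and 2^(n-2) + 1; a language with one quotient is empty or
   universal and therefore equals its reversal.

   For the lower bounds the witnesses are explicit DFAs.  For a reachable DFA the quotients of
   the reversed language correspond to the sets acc_states u of states from which u is
   accepted, and the DFA is minimal when these sets separate its states.  Each witness has words
   removing (or adding) a single state from such a set, so by induction a whole family of 2^m or
   2^m + 1 sets is realised, and this family also separates the states.  The prefix, suffix and
   factor witnesses are built on a cyclic rotation of the states 1..m; the subword witness uses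
   one letter per state to be killed. *)

definition quotients :: "'a list set \<Rightarrow> 'a list set set" where
  "quotients L = {lquot L w | w. True}"

(* The quotients of L that contain u.  The quotient of the reversal of L by w is determined
   by quots_containing L (rev w), which is the source of all upper bounds below. *)
definition quots_containing :: "'a list set \<Rightarrow> 'a list \<Rightarrow> 'a list set set" where
  "quots_containing L u = {K \<in> quotients L. u \<in> K}"

lemma kappa_quotients: "kappa L = card (quotients L)"
  by (simp add: kappa_def quotients_def)

lemma lquot_in_quotients: "lquot L w \<in> quotients L"
  by (auto simp: quotients_def)

lemma L_in_quotients: "L \<in> quotients L"
  using lquot_in_quotients[of L "[]"] by (simp add: lquot_def)

lemma foldl_closed: "q \<in> Q \<Longrightarrow> \<forall>q\<in>Q. \<forall>x. \<delta> q x \<in> Q \<Longrightarrow> foldl \<delta> q w \<in> Q"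
  by (induction w arbitrary: q) auto

lemma foldl_fixed: "(\<And>x. x \<in> set w \<Longrightarrow> \<delta> q x = q) \<Longrightarrow> foldl \<delta> q w = q"
  by (induction w) auto

(* Every quotient of a DFA language is the language of some state, so there are finitely many. *)
lemma regular_finite_quotients:
  assumes "regular_lang L" shows "finite (quotients L)"
proof -
  obtain Q \<delta> q0 F where fin: "finite (Q::nat set)" and q0: "q0 \<in> Q"
    and cl: "\<forall>q\<in>Q. \<forall>x. \<delta> q x \<in> Q" and L: "L = {w. foldl \<delta> q0 w \<in> F}"
    using assms unfolding regular_lang_def by blast
  have "quotients L \<subseteq> (\<lambda>q. {x. foldl \<delta> q x \<in> F}) ` Q"
    using foldl_closed[OF q0 cl] by (auto simp: quotients_def lquot_def L)
  thus ?thesis using fin finite_surj by blast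
qed

lemma lquot_lrev: "lquot (lrev L) w = {x. lquot L (rev x) \<in> quots_containing L (rev w)}"
proof -
  have "x \<in> rev ` L \<longleftrightarrow> rev x \<in> L" for x by (metis image_iff rev_rev_ident)
  thus ?thesis
    using lquot_in_quotients[of L] by (auto simp: lquot_def lrev_def quots_containing_def)
qed

lemma kappa_rev_le:
  assumes "range (quots_containing L) \<subseteq> A" "finite A"
  shows "kappa (lrev L) \<le> card A"
proof -
  let ?G = "\<lambda>S. {x. lquot L (rev x) \<in> S}"
  have "quotients (lrev L) \<subseteq> ?G ` A"
    using assms(1) by (auto simp: quotients_def lquot_lrev)
  hence "card (quotients (lrev L)) \<le> card (?G ` A)"
    using assms(2) by (simp add: card_mono)
  also have "\<dots> \<le> card A" using assms(2) card_image_le by blast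
  finally show ?thesis by (simp add: kappa_quotients)
qed

lemma factor_prefix: "factor_closed L \<Longrightarrow> prefix_closed L"
  unfolding factor_closed_def prefix_closed_def by (auto intro: prefix_imp_sublist)

lemma factor_suffix: "factor_closed L \<Longrightarrow> suffix_closed L"
  unfolding factor_closed_def suffix_closed_def by (auto intro: suffix_imp_sublist)

lemma subword_factor: "subword_closed L \<Longrightarrow> factor_closed L"
  unfolding factor_closed_def subword_closed_def by (auto intro: sublist_imp_subseq)

lemma prefix_suffix_factor: "prefix_closed L \<Longrightarrow> suffix_closed L \<Longrightarrow> factor_closed L"
  unfolding factor_closed_def prefix_closed_def suffix_closed_def sublist_def
  by (metis prefixI suffixI)

(* A language with a single quotient is empty or universal, hence equal to its reversal. *)
lemma kappa_one_rev:
  assumes "kappa L = 1" shows "kappa (lrev L) = 1"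
proof -
  have "card (quotients L) = 1" using assms by (simp add: kappa_quotients)
  then obtain K where "quotients L = {K}" using card_1_singletonE by blast
  hence const: "lquot L w = L" for w
    using L_in_quotients[of L] lquot_in_quotients[of L w] by simp
  have "w \<in> L \<longleftrightarrow> [] \<in> lquot L w" for w by (simp add: lquot_def)
  hence "w \<in> L \<longleftrightarrow> [] \<in> L" for w using const by simp
  hence "L = {} \<or> L = UNIV" by blast
  moreover have "lrev {} = {}" "lrev UNIV = UNIV"
    unfolding lrev_def by (simp, metis surj_def rev_rev_ident)
  ultimately have "lrev L = L" by auto
  thus ?thesis using assms by simp
qed

(* A non-universal prefix-closed language has the empty quotient: some word has no
   extension in L. *)
lemma empty_in_quotients_prefix:
  assumes "prefix_closed L" "kappa L \<ge> 2" shows "{} \<in> quotients L"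
proof (rule ccontr)
  assume no_empty: "{} \<notin> quotients L"
  have "w \<in> L" for w
  proof -
    have "lquot L w \<noteq> {}" using no_empty lquot_in_quotients[of L w] by metis
    then obtain x where "w @ x \<in> L" by (auto simp: lquot_def)
    thus "w \<in> L" using assms(1) unfolding prefix_closed_def by (metis prefixI)
  qed
  hence "lquot L w = UNIV" for w by (auto simp: lquot_def)
  hence "quotients L = {UNIV}" unfolding quotients_def by auto
  thus False using assms(2) by (simp add: kappa_quotients)
qed

(* Upper bound for prefix-closed L: the empty quotient contains no word, so
   quots_containing L u ranges over subsets of the other n - 1 quotients. *)
lemma ub_prefix:
  assumes "regular_lang L" "kappa L = n" "n \<ge> 2" "prefix_closed L"
  shows "kappa (lrev L) \<le> 2 ^ (n - 1)"
proof -
  have fin: "finite (quotients L)" using assms(1) by (rule regular_finite_quotients)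
  have "{} \<in> quotients L" using empty_in_quotients_prefix assms(2-4) by blast
  hence card: "card (quotients L - {{}}) = n - 1" using fin assms(2) by (simp add: kappa_quotients)
  have "range (quots_containing L) \<subseteq> Pow (quotients L - {{}})" by (auto simp: quots_containing_def)
  hence "kappa (lrev L) \<le> card (Pow (quotients L - {{}}))" using fin by (simp add: kappa_rev_le)
  thus ?thesis using fin card by (simp add: card_Pow)
qed

(* For suffix-closed L every quotient is a subset of L.  So a word outside L lies in no
   quotient, while a word in L lies in L itself and never in the empty quotient. *)
lemma quots_containing_suffix_closed:
  assumes "suffix_closed L"
  shows "quots_containing L u = {}
    \<or> (\<exists>X \<subseteq> quotients L - {L, {}}. quots_containing L u = insert L X)"
proof (cases "u \<in> L")
  case True
  hence "quots_containing L u = insert L (quots_containing L u - {L, {}})"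
    using L_in_quotients[of L] by (auto simp: quots_containing_def)
  moreover have "quots_containing L u - {L, {}} \<subseteq> quotients L - {L, {}}"
    by (auto simp: quots_containing_def)
  ultimately show ?thesis by blast
next
  case False
  have "K \<subseteq> L" if "K \<in> quotients L" for K
    using that assms unfolding quotients_def suffix_closed_def lquot_def by (auto simp: suffix_def)
  hence "quots_containing L u = {}" using False by (auto simp: quots_containing_def)
  thus ?thesis ..
qed

lemma ub_suffix_general:
  assumes "regular_lang L" "suffix_closed L"
  shows "kappa (lrev L) \<le> 2 ^ card (quotients L - {L, {}}) + 1"
proof -
  have fin: "finite (quotients L)" using assms(1) by (rule regular_finite_quotients)
  let ?A = "insert {} (insert L ` Pow (quotients L - {L, {}}))"
  have "range (quots_containing L) \<subseteq> ?A"
  proof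
    fix S assume "S \<in> range (quots_containing L)"
    then obtain u where "S = quots_containing L u" by blast
    thus "S \<in> ?A" using quots_containing_suffix_closed[OF assms(2), of u] by auto
  qed
  hence "kappa (lrev L) \<le> card ?A" using fin by (simp add: kappa_rev_le)
  also have "\<dots> \<le> card (insert L ` Pow (quotients L - {L, {}})) + 1"
    using fin by (simp add: card_insert_if)
  also have "\<dots> \<le> card (Pow (quotients L - {L, {}})) + 1"
    by (simp add: card_image_le fin)
  finally show ?thesis using fin by (simp add: card_Pow)
qed

lemma ub_suffix:
  assumes "regular_lang L" "kappa L = n" "suffix_closed L"
  shows "kappa (lrev L) \<le> 2 ^ (n - 1) + 1"
proof -
  have fin: "finite (quotients L)" using assms(1) by (rule regular_finite_quotients)
  have "card (quotients L - {L, {}}) \<le> card (quotients L - {L})" using fin by (intro card_mono) auto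
  also have "\<dots> = n - 1" using fin L_in_quotients[of L] assms(2) by (simp add: kappa_quotients)
  finally have "2 ^ card (quotients L - {L, {}}) \<le> (2::nat) ^ (n - 1)" by simp
  thus ?thesis using ub_suffix_general[OF assms(1,3)] by linarith
qed

(* Upper bound for factor-closed (and hence for subword-closed) languages: here both L and
   the empty set are quotients, and they are distinct when n >= 2. *)
lemma ub_factor:
  assumes "regular_lang L" "kappa L = n" "n \<ge> 2" "factor_closed L"
  shows "kappa (lrev L) \<le> 2 ^ (n - 2) + 1"
proof -
  have fin: "finite (quotients L)" using assms(1) by (rule regular_finite_quotients)
  have empty: "{} \<in> quotients L"
    using empty_in_quotients_prefix factor_prefix assms(2-4) by blast
  have "L \<noteq> {}"
  proof
    assume "L = {}"
    hence "quotients L = {{}}" by (auto simp: quotients_def lquot_def)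
    thus False using assms(2,3) by (simp add: kappa_quotients)
  qed
  hence "card (quotients L - {L, {}}) = n - 2"
    using fin empty L_in_quotients[of L] assms(2) by (simp add: kappa_quotients card_Diff_subset)
  thus ?thesis using ub_suffix_general[OF assms(1) factor_suffix[OF assms(4)]] by simp
qed

definition dfa_lang :: "(nat \<Rightarrow> 'a \<Rightarrow> nat) \<Rightarrow> nat \<Rightarrow> nat set \<Rightarrow> 'a list set" where
  "dfa_lang \<delta> q0 F = {w. foldl \<delta> q0 w \<in> F}"

(* The states of Q from which u is accepted.  These sets play the role of the states of the
   reversed (determinised) automaton. *)
definition acc_states :: "nat set \<Rightarrow> (nat \<Rightarrow> 'a \<Rightarrow> nat) \<Rightarrow> nat set \<Rightarrow> 'a list \<Rightarrow> nat set" where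
  "acc_states Q \<delta> F u = {q \<in> Q. foldl \<delta> q u \<in> F}"

definition separates :: "'b set set \<Rightarrow> 'b set \<Rightarrow> bool" where
  "separates \<S> Q \<longleftrightarrow> (\<forall>p\<in>Q. \<forall>q\<in>Q. p \<noteq> q \<longrightarrow> (\<exists>S\<in>\<S>. (p \<in> S) \<noteq> (q \<in> S)))"

lemma dfa_kappa:
  assumes q0: "q0 \<in> Q" and cl: "\<forall>q\<in>Q. \<forall>x. \<delta> q x \<in> Q"
    and reach: "\<forall>q\<in>Q. \<exists>w. foldl \<delta> q0 w = q"
    and sep: "separates (range (acc_states Q \<delta> F)) Q"
  shows "kappa (dfa_lang \<delta> q0 F) = card Q"
proof -
  let ?lang = "\<lambda>q. {x. foldl \<delta> q x \<in> F}"
  have quot: "lquot (dfa_lang \<delta> q0 F) w = ?lang (foldl \<delta> q0 w)" for w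
    by (simp add: lquot_def dfa_lang_def)
  have "range (foldl \<delta> q0) = Q" using reach foldl_closed[OF q0 cl] by auto
  moreover have "quotients (dfa_lang \<delta> q0 F) = ?lang ` range (foldl \<delta> q0)"
    by (auto simp: quotients_def quot)
  ultimately have "quotients (dfa_lang \<delta> q0 F) = ?lang ` Q" by simp
  moreover have "inj_on ?lang Q"
  proof (rule inj_onI)
    fix p q assume "p \<in> Q" "q \<in> Q" "?lang p = ?lang q"
    thus "p = q" using sep unfolding separates_def acc_states_def by blast
  qed
  ultimately show ?thesis by (simp add: kappa_quotients card_image)
qed

lemma dfa_kappa_rev:
  assumes q0: "q0 \<in> Q" and cl: "\<forall>q\<in>Q. \<forall>x. \<delta> q x \<in> Q"
    and reach: "\<forall>q\<in>Q. \<exists>w. foldl \<delta> q0 w = q"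
  shows "kappa (lrev (dfa_lang \<delta> q0 F)) = card (range (acc_states Q \<delta> F))"
proof -
  let ?lang = "\<lambda>S. {x. foldl \<delta> q0 (rev x) \<in> S}"
  have quot: "lquot (lrev (dfa_lang \<delta> q0 F)) w = ?lang (acc_states Q \<delta> F (rev w))" for w
  proof -
    have "x \<in> rev ` dfa_lang \<delta> q0 F \<longleftrightarrow> rev x \<in> dfa_lang \<delta> q0 F" for x
      by (metis image_iff rev_rev_ident)
    thus ?thesis using foldl_closed[OF q0 cl]
      by (auto simp: lquot_def lrev_def dfa_lang_def acc_states_def)
  qed
  have "range (\<lambda>w. acc_states Q \<delta> F (rev w)) = range (acc_states Q \<delta> F)"
    by (metis surj_def rev_rev_ident image_image)
  moreover have "quotients (lrev (dfa_lang \<delta> q0 F)) = ?lang ` range (\<lambda>w. acc_states Q \<delta> F (rev w))"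
    by (auto simp: quotients_def quot)
  ultimately have "quotients (lrev (dfa_lang \<delta> q0 F)) = ?lang ` range (acc_states Q \<delta> F)" by simp
  moreover have "inj_on ?lang (range (acc_states Q \<delta> F))"
  proof (rule inj_onI)
    fix S S' assume S: "S \<in> range (acc_states Q \<delta> F)" "S' \<in> range (acc_states Q \<delta> F)"
      and eq: "?lang S = ?lang S'"
    have "q \<in> S \<longleftrightarrow> q \<in> S'" if "q \<in> Q" for q
    proof -
      obtain w where "foldl \<delta> q0 w = q" using reach \<open>q \<in> Q\<close> by blast
      hence "rev w \<in> ?lang S \<longleftrightarrow> q \<in> S" "rev w \<in> ?lang S' \<longleftrightarrow> q \<in> S'" by simp_all
      thus ?thesis using eq by simp
    qed
    moreover have "S \<subseteq> Q" "S' \<subseteq> Q" using S by (auto simp: acc_states_def)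
    ultimately show "S = S'" by blast
  qed
  ultimately show ?thesis by (simp add: kappa_quotients card_image)
qed

lemma separates_mono: "separates \<S> Q \<Longrightarrow> \<S> \<subseteq> \<T> \<Longrightarrow> Q' \<subseteq> Q \<Longrightarrow> separates \<T> Q'"
  unfolding separates_def by (meson subsetD)

lemma dfa_witness:
  fixes \<delta> :: "nat \<Rightarrow> 'a::finite \<Rightarrow> nat"
  assumes fin: "finite Q" and q0: "q0 \<in> Q" and cl: "\<forall>q\<in>Q. \<forall>x. \<delta> q x \<in> Q" and F: "F \<subseteq> Q"
    and reach: "\<forall>q\<in>Q. \<exists>w. foldl \<delta> q0 w = q"
    and family: "\<S> \<subseteq> range (acc_states Q \<delta> F)" and sep: "separates \<S> Q"
  shows "regular_lang (dfa_lang \<delta> q0 F) \<and> kappa (dfa_lang \<delta> q0 F) = card Q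
    \<and> card \<S> \<le> kappa (lrev (dfa_lang \<delta> q0 F))"
proof (intro conjI)
  show "regular_lang (dfa_lang \<delta> q0 F)"
    unfolding regular_lang_def dfa_lang_def using fin q0 cl F
    by (intro exI[of _ Q] exI[of _ \<delta>] exI[of _ q0] exI[of _ F]) simp
  show "kappa (dfa_lang \<delta> q0 F) = card Q"
    using q0 cl reach separates_mono[OF sep family order_refl] by (rule dfa_kappa)
  have "range (acc_states Q \<delta> F) \<subseteq> Pow Q" by (auto simp: acc_states_def)
  hence "finite (range (acc_states Q \<delta> F))" using fin finite_subset by blast
  hence "card \<S> \<le> card (range (acc_states Q \<delta> F))" using family card_mono by blast
  thus "card \<S> \<le> kappa (lrev (dfa_lang \<delta> q0 F))" using dfa_kappa_rev[OF q0 cl reach] by simp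
qed

lemma separates_Pow: "separates (Pow {1..m}) {..m::nat}"
  unfolding separates_def
proof (intro ballI impI)
  fix p q :: nat assume "p \<in> {..m}" "q \<in> {..m}" "p \<noteq> q"
  thus "\<exists>S\<in>Pow {1..m}. (p \<in> S) \<noteq> (q \<in> S)"
  proof (cases "p = 0")
    case True thus ?thesis using \<open>p \<noteq> q\<close> \<open>q \<in> {..m}\<close> by (intro bexI[of _ "{q}"]) auto
  next
    case False thus ?thesis using \<open>p \<noteq> q\<close> \<open>p \<in> {..m}\<close> by (intro bexI[of _ "{p}"]) auto
  qed
qed

(* Sets containing 0 separate 0..m+1; the sets {0, p} single out the core states. *)
lemma separates_insert0_Pow: "separates (insert 0 ` Pow {1..m}) {..Suc m}"
  unfolding separates_def
proof (intro ballI impI)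
  fix p q :: nat assume pq: "p \<in> {..Suc m}" "q \<in> {..Suc m}" "p \<noteq> q"
  show "\<exists>S\<in>insert 0 ` Pow {1..m}. (p \<in> S) \<noteq> (q \<in> S)"
  proof (cases "p = 0 \<or> q = 0")
    case True
    thus ?thesis using pq by (intro bexI[of _ "{0}"]) auto
  next
    case False
    show ?thesis
    proof (cases "p \<le> m")
      case True
      thus ?thesis using pq False by (intro bexI[of _ "{0, p}"]) auto
    next
      case outside: False
      hence "q \<le> m" using pq by auto
      thus ?thesis using pq False by (intro bexI[of _ "{0, q}"]) auto
    qed
  qed
qed

lemma acc_states_hit:
  assumes cl: "\<forall>q\<in>Q. \<forall>x. \<delta> q x \<in> Q" and r: "r \<in> Q"
    and hit: "\<forall>q\<in>Q. foldl \<delta> q w = (if q = r then s else q)"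
  shows "acc_states Q \<delta> F (w @ u) =
    (if s \<in> acc_states Q \<delta> F u then insert r (acc_states Q \<delta> F u) else acc_states Q \<delta> F u - {r})"
proof -
  have s: "s \<in> Q" using hit r foldl_closed[OF r cl, of w] by simp
  have mem: "q \<in> acc_states Q \<delta> F (w @ u) \<longleftrightarrow> q \<in> Q \<and> (if q = r then s \<in> acc_states Q \<delta> F u
      else q \<in> acc_states Q \<delta> F u)" for q
    using hit s by (auto simp: acc_states_def)
  have sub: "acc_states Q \<delta> F u \<subseteq> Q" by (auto simp: acc_states_def)
  show ?thesis
  proof (cases "s \<in> acc_states Q \<delta> F u")
    case True thus ?thesis using mem sub r by (auto simp: set_eq_iff)
  next
    case False thus ?thesis using mem sub by (auto simp: set_eq_iff)
  qed
qed

lemma diff_closed: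
  assumes "finite S" "S \<subseteq> R" "X \<in> A" "\<And>r Y. r \<in> R \<Longrightarrow> Y \<in> A \<Longrightarrow> Y - {r} \<in> A"
  shows "X - S \<in> A"
  using assms(1,2)
proof (induction S rule: finite_induct)
  case (insert r S)
  have "X - insert r S = (X - S) - {r}" by blast
  thus ?case using insert assms(4)[of r "X - S"] by simp
qed (use assms(3) in simp)

lemma union_closed:
  assumes "finite S" "S \<subseteq> R" "X \<in> A" "\<And>r Y. r \<in> R \<Longrightarrow> Y \<in> A \<Longrightarrow> insert r Y \<in> A"
  shows "X \<union> S \<in> A"
  using assms(1,2)
proof (induction S rule: finite_induct)
  case (insert r S)
  have "X \<union> insert r S = insert r (X \<union> S)" by blast
  thus ?case using insert assms(4)[of r "X \<union> S"] by simp
qed (use assms(3) in simp)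

lemma card_insert0_Pow: "card (insert {} (insert (0::nat) ` Pow {1..m})) = 2 ^ m + 1"
proof -
  have "inj_on (insert (0::nat)) (Pow {1..m})"
  proof (rule inj_onI)
    fix A B assume "A \<in> Pow {1..m}" "B \<in> Pow {1..m}" "insert (0::nat) A = insert 0 B"
    moreover have "0 \<notin> A" "0 \<notin> B" using calculation(1,2) by auto
    ultimately show "A = B" by (metis Diff_insert_absorb)
  qed
  moreover have "{} \<notin> insert (0::nat) ` Pow {1..m}" by auto
  ultimately show ?thesis by (simp add: card_image card_Pow)
qed

lemma prefix_closed_dfa:
  assumes dead: "\<And>q x. q \<notin> F \<Longrightarrow> \<delta> q x \<notin> F"
  shows "prefix_closed (dfa_lang \<delta> q0 F)"
proof -
  have stuck: "q \<notin> F \<Longrightarrow> foldl \<delta> q w \<notin> F" for q w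
    by (induction w arbitrary: q) (auto simp: dead)
  show ?thesis
    unfolding prefix_closed_def dfa_lang_def prefix_def using stuck by fastforce
qed

lemma simulation:
  assumes step: "\<And>p p' x. R p p' \<Longrightarrow> R (\<delta> p x) (\<delta> p' x)"
    and acc: "\<And>p p'. R p p' \<Longrightarrow> p \<in> F \<Longrightarrow> p' \<in> F"
  shows "R p p' \<Longrightarrow> foldl \<delta> p w \<in> F \<Longrightarrow> foldl \<delta> p' w \<in> F"
proof (induction w arbitrary: p p')
  case Nil thus ?case using acc by simp
next
  case (Cons x w)
  have "R (\<delta> p x) (\<delta> p' x)" using step Cons.prems(1) .
  thus ?case using Cons.IH Cons.prems(2) by simp
qed

lemma suffix_closed_dfa:
  assumes step: "\<And>p p' x. R p p' \<Longrightarrow> R (\<delta> p x) (\<delta> p' x)"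
    and acc: "\<And>p p'. R p p' \<Longrightarrow> p \<in> F \<Longrightarrow> p' \<in> F"
    and init: "\<And>p. R p q0"
  shows "suffix_closed (dfa_lang \<delta> q0 F)"
  unfolding suffix_closed_def dfa_lang_def suffix_def
  using simulation[where R = R, OF step acc init] by auto

(* Subword-closure: every state is simulated by each of its predecessors, so deleting
   letters from an accepted word keeps it accepted. *)
lemma subword_closed_dfa:
  assumes step: "\<And>p p' x. R p p' \<Longrightarrow> R (\<delta> p x) (\<delta> p' x)"
    and acc: "\<And>p p'. R p p' \<Longrightarrow> p \<in> F \<Longrightarrow> p' \<in> F"
    and decr: "\<And>q x. R (\<delta> q x) q"
  shows "subword_closed (dfa_lang \<delta> q0 F)"
proof -
  have "subseq v w \<Longrightarrow> foldl \<delta> q w \<in> F \<Longrightarrow> foldl \<delta> q v \<in> F" for v w q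
  proof (induction v w arbitrary: q rule: list_emb.induct)
    case (list_emb_Nil w)
    have "foldl \<delta> q w \<in> F \<Longrightarrow> q \<in> F" for q
      by (induction w arbitrary: q) (auto intro: acc decr)
    thus ?case using list_emb_Nil by simp
  next
    case (list_emb_Cons v w x)
    have "foldl \<delta> q w \<in> F"
      using simulation[where R = R, OF step acc decr] list_emb_Cons.prems by simp
    thus ?case using list_emb_Cons.IH by simp
  qed simp
  thus ?thesis unfolding subword_closed_def dfa_lang_def by blast
qed

(* The witnesses for the prefix, suffix and factor bounds share a core on the states 1..m:
   letter a rotates them cyclically, letter b sends state 1 to a special state s and fixes the
   others. *)
lemma rot_pow:
  assumes rot: "\<And>q. 1 \<le> q \<Longrightarrow> q \<le> m \<Longrightarrow> \<delta> q a = Suc (q mod m)"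
  shows "1 \<le> q \<Longrightarrow> q \<le> m \<Longrightarrow> foldl \<delta> q (replicate k a) = Suc ((q - 1 + k) mod m)"
proof (induction k arbitrary: q)
  case (Suc k)
  have m: "m > 0" using Suc.prems by simp
  have "foldl \<delta> q (replicate (Suc k) a) = foldl \<delta> (Suc (q mod m)) (replicate k a)"
    using rot Suc.prems by simp
  also have "\<dots> = Suc ((q mod m + k) mod m)" using Suc.IH m by (simp add: Suc_leI)
  also have "\<dots> = Suc ((q - 1 + Suc k) mod m)" using Suc.prems by (simp add: mod_add_left_eq)
  finally show ?case .
qed simp

lemma rot_reach:
  assumes "\<And>q. 1 \<le> q \<Longrightarrow> q \<le> m \<Longrightarrow> \<delta> q a = Suc (q mod m)" "1 \<le> q" "q \<le> m"
  shows "foldl \<delta> 1 (replicate (q - 1) a) = q"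
  using rot_pow[where m=m and \<delta>=\<delta> and a=a, OF assms(1), of 1 "q - 1"] assms(2,3) by simp

(* The word hitw m a b r rotates r to 1, applies b and rotates back; it will send r to s and
   fix every other state. *)
definition hitw :: "nat \<Rightarrow> 'a \<Rightarrow> 'a \<Rightarrow> nat \<Rightarrow> 'a list" where
  "hitw m a b r = replicate ((m + 1 - r) mod m) a @ [b] @ replicate (m - (m + 1 - r) mod m) a"

lemma hit_key:
  fixes r m q :: nat
  assumes "1 \<le> r" "r \<le> m" "1 \<le> q" "q \<le> m"
  shows "(q - 1 + (m + 1 - r) mod m) mod m = 0 \<longleftrightarrow> q = r"
proof (cases "r = 1")
  case True
  hence "(m + 1 - r) mod m = 0" by simp
  thus ?thesis using assms True by auto
next
  case False
  hence j: "(m + 1 - r) mod m = m + 1 - r" using assms by simp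
  show ?thesis
  proof (cases "q \<ge> r")
    case True
    hence "q - 1 + (m + 1 - r) = (q - r) + m" using assms by simp
    hence "(q - 1 + (m + 1 - r)) mod m = (q - r) mod m" by (metis mod_add_self2)
    also have "\<dots> = q - r" using assms by (intro mod_less) arith
    finally show ?thesis using j True by auto
  next
    case False
    hence "q - 1 + (m + 1 - r) < m" "q - 1 + (m + 1 - r) > 0" using assms by auto
    thus ?thesis using j False by auto
  qed
qed

lemma rot_hit:
  assumes rot: "\<And>q. 1 \<le> q \<Longrightarrow> q \<le> m \<Longrightarrow> \<delta> q a = Suc (q mod m)"
    and b1: "\<delta> 1 b = s" and bq: "\<And>q. 2 \<le> q \<Longrightarrow> q \<le> m \<Longrightarrow> \<delta> q b = q" and sa: "\<delta> s a = s"
    and r: "1 \<le> r" "r \<le> m" and q: "1 \<le> q" "q \<le> m"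
  shows "foldl \<delta> q (hitw m a b r) = (if q = r then s else q)"
proof -
  define j where "j = (m + 1 - r) mod m"
  have jm: "j < m" using r by (simp add: j_def)
  define q1 where "q1 = Suc ((q - 1 + j) mod m)"
  have q1: "1 \<le> q1" "q1 \<le> m" using jm by (auto simp: q1_def Suc_leI)
  have "foldl \<delta> q (replicate j a) = q1"
    using rot_pow[where m=m and \<delta>=\<delta> and a=a, OF rot q] by (simp add: q1_def)
  hence "foldl \<delta> q (hitw m a b r) = foldl \<delta> (\<delta> q1 b) (replicate (m - j) a)"
    unfolding hitw_def j_def[symmetric] by simp
  also have "\<dots> = (if q = r then s else q)"
  proof (cases "q = r")
    case True
    hence "q1 = 1" using hit_key[OF r q] by (simp add: q1_def j_def)
    thus ?thesis using True b1 sa foldl_fixed[of "replicate (m - j) a" \<delta> s] by simp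
  next
    case False
    hence "q1 \<ge> 2" using hit_key[OF r q] q1 by (simp add: q1_def j_def)
    hence "\<delta> q1 b = q1" using bq q1 by simp
    moreover have "(q1 - 1 + (m - j)) mod m = q - 1"
    proof -
      have "(q1 - 1 + (m - j)) mod m = (q - 1 + j + (m - j)) mod m"
        by (simp add: q1_def mod_add_left_eq)
      also have "q - 1 + j + (m - j) = (q - 1) + m" using jm by simp
      also have "((q - 1) + m) mod m = (q - 1) mod m" by (rule mod_add_self2)
      finally show ?thesis using q by simp
    qed
    ultimately show ?thesis
      using False q rot_pow[where m=m and \<delta>=\<delta> and a=a, OF rot q1, of "m - j"] by simp
  qed
  finally show ?thesis .
qed

lemma hitw_action:
  assumes rot: "\<And>q. 1 \<le> q \<Longrightarrow> q \<le> m \<Longrightarrow> \<delta> q a = Suc (q mod m)"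
    and b1: "\<delta> 1 b = s" and bq: "\<And>q. 2 \<le> q \<Longrightarrow> q \<le> m \<Longrightarrow> \<delta> q b = q"
    and fixed: "\<And>q x. q \<in> Q - {1..m} \<Longrightarrow> x \<in> {a, b} \<Longrightarrow> \<delta> q x = q"
    and s: "s \<in> Q - {1..m}" and r: "r \<in> {1..m}"
  shows "\<forall>q\<in>Q. foldl \<delta> q (hitw m a b r) = (if q = r then s else q)"
proof
  fix q assume "q \<in> Q"
  show "foldl \<delta> q (hitw m a b r) = (if q = r then s else q)"
  proof (cases "q \<in> {1..m}")
    case True
    thus ?thesis
      using rot_hit[where m=m and \<delta>=\<delta> and a=a and b=b, OF rot b1 bq] fixed[OF s] r by simp
  next
    case False
    hence "foldl \<delta> q (hitw m a b r) = q"
      using fixed \<open>q \<in> Q\<close> by (intro foldl_fixed) (auto simp: hitw_def)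
    thus ?thesis using False r by auto
  qed
qed

lemma acc_states_remove_all:
  assumes cl: "\<forall>q\<in>Q. \<forall>x. \<delta> q x \<in> Q" and R: "finite R" "R \<subseteq> Q"
    and hit: "\<And>r. r \<in> R \<Longrightarrow> \<forall>q\<in>Q. foldl \<delta> q (W r) = (if q = r then s else q)"
    and dead: "\<And>u. s \<notin> acc_states Q \<delta> F u" and S: "S \<subseteq> R"
  shows "acc_states Q \<delta> F [] - S \<in> range (acc_states Q \<delta> F)"
proof (rule diff_closed[OF finite_subset[OF S R(1)] S rangeI])
  fix r Y assume r: "r \<in> R" and "Y \<in> range (acc_states Q \<delta> F)"
  then obtain u where u: "Y = acc_states Q \<delta> F u" by blast
  have "acc_states Q \<delta> F (W r @ u) = Y - {r}"
    using acc_states_hit[OF cl _ hit[OF r]] r R(2) dead u by auto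
  thus "Y - {r} \<in> range (acc_states Q \<delta> F)" by (metis rangeI)
qed

lemma acc_states_insert_all:
  assumes cl: "\<forall>q\<in>Q. \<forall>x. \<delta> q x \<in> Q" and R: "finite R" "R \<subseteq> Q"
    and hit: "\<And>r. r \<in> R \<Longrightarrow> \<forall>q\<in>Q. foldl \<delta> q (W r) = (if q = r then s else q)"
    and live: "s \<in> acc_states Q \<delta> F []" and S: "S \<subseteq> R"
  shows "acc_states Q \<delta> F [] \<union> S \<in> range (acc_states Q \<delta> F)"
proof -
  let ?A = "{Y \<in> range (acc_states Q \<delta> F). s \<in> Y}"
  have "acc_states Q \<delta> F [] \<union> S \<in> ?A"
  proof (rule union_closed[OF finite_subset[OF S R(1)] S])
    show "acc_states Q \<delta> F [] \<in> ?A" using live by blast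
  next
    fix r Y assume r: "r \<in> R" and "Y \<in> ?A"
    then obtain u where u: "Y = acc_states Q \<delta> F u" and "s \<in> Y" by blast
    have "acc_states Q \<delta> F (W r @ u) = insert r Y"
      using acc_states_hit[OF cl _ hit[OF r]] r R(2) \<open>s \<in> Y\<close> u by auto
    thus "insert r Y \<in> ?A" using \<open>s \<in> Y\<close> by (metis (mono_tags) insertCI mem_Collect_eq rangeI)
  qed
  thus ?thesis by blast
qed

(* Prefix witness: states 0..m, initial 1, final 1..m, and 0 is a sink.  The reversal realises every
   subset of 1..m, giving 2^m = 2^(n-1) quotients. *)
definition prefix_dfa :: "nat \<Rightarrow> 'a \<Rightarrow> nat \<Rightarrow> 'a \<Rightarrow> nat" where
  "prefix_dfa m a q x =
    (if 1 \<le> q \<and> q \<le> m then (if x = a then Suc (q mod m) else if q = 1 then 0 else q) else 0)"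

lemma prefix_dfa_hit:
  assumes "a \<noteq> b" "r \<in> {1..m}"
  shows "\<forall>q\<in>{..m}. foldl (prefix_dfa m a) q (hitw m a b r) = (if q = r then 0 else q)"
  by (rule hitw_action) (use assms in \<open>auto simp: prefix_dfa_def\<close>)

lemma wit_prefix:
  fixes a b :: "'a::finite"
  assumes ab: "a \<noteq> b" and m: "1 \<le> m"
  shows "\<exists>L :: 'a list set. regular_lang L \<and> prefix_closed L \<and> kappa L = m + 1
    \<and> 2 ^ m \<le> kappa (lrev L)"
proof -
  let ?\<delta> = "prefix_dfa m a" and ?Q = "{..m}" and ?F = "{1..m}"
  let ?acc = "acc_states ?Q ?\<delta> ?F"
  have cl: "\<forall>q\<in>?Q. \<forall>x. ?\<delta> q x \<in> ?Q" using m by (auto simp: prefix_dfa_def Suc_leI)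
  have reach: "\<forall>q\<in>?Q. \<exists>w. foldl ?\<delta> 1 w = q"
  proof
    fix q assume q: "q \<in> ?Q"
    show "\<exists>w. foldl ?\<delta> 1 w = q"
    proof (cases "q = 0")
      case True
      thus ?thesis using ab m by (intro exI[of _ "[b]"]) (simp add: prefix_dfa_def)
    next
      case False
      thus ?thesis using q rot_reach[of m ?\<delta> a q] by (auto simp: prefix_dfa_def)
    qed
  qed
  have dead: "0 \<notin> ?acc u" for u
    using foldl_fixed[of u ?\<delta> 0] by (simp add: acc_states_def prefix_dfa_def)
  have "Pow {1..m} \<subseteq> range ?acc"
  proof
    fix S assume S: "S \<in> Pow {1..m}"
    have "?acc [] - ({1..m} - S) \<in> range ?acc"
      using prefix_dfa_hit[OF ab] dead S
      by (intro acc_states_remove_all[where R = "{1..m}" and W = "hitw m a b", OF cl]) auto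
    moreover have "?acc [] = {1..m}" by (auto simp: acc_states_def)
    ultimately show "S \<in> range ?acc" using S by (simp add: double_diff)
  qed
  hence "regular_lang (dfa_lang ?\<delta> 1 ?F) \<and> kappa (dfa_lang ?\<delta> 1 ?F) = card ?Q
      \<and> card (Pow {1..m}) \<le> kappa (lrev (dfa_lang ?\<delta> 1 ?F))"
    using m by (intro dfa_witness[OF _ _ cl _ reach _ separates_Pow]) auto
  moreover have "prefix_closed (dfa_lang ?\<delta> 1 ?F)"
    by (rule prefix_closed_dfa) (auto simp: prefix_dfa_def)
  ultimately show ?thesis by (auto simp: card_Pow)
qed

(* Suffix witness: states 0..m, initial and only final state 0.  Letter a rotates 1..m,
   b sends 1 to 0, and every further letter c resets to state 1.  The reversal realises the
   empty set and every set containing 0, giving 2^m + 1 = 2^(n-1) + 1 quotients. *)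
definition suffix_dfa :: "nat \<Rightarrow> 'a \<Rightarrow> 'a \<Rightarrow> nat \<Rightarrow> 'a \<Rightarrow> nat" where
  "suffix_dfa m a b q x =
    (if x = a then (if 1 \<le> q \<and> q \<le> m then Suc (q mod m) else 0)
     else if x = b then (if q = 1 then 0 else q) else 1)"

lemma suffix_dfa_hit:
  assumes "a \<noteq> b" "r \<in> {1..m}"
  shows "\<forall>q\<in>{..m}. foldl (suffix_dfa m a b) q (hitw m a b r) = (if q = r then 0 else q)"
  by (rule hitw_action) (use assms in \<open>auto simp: suffix_dfa_def\<close>)

(* The suffix witness: state 0 simulates every state, so the language is suffix-closed. *)
lemma wit_suffix:
  fixes a b c :: "'a::finite"
  assumes abc: "a \<noteq> b" "a \<noteq> c" "b \<noteq> c" and m: "1 \<le> m"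
  shows "\<exists>L :: 'a list set. regular_lang L \<and> suffix_closed L \<and> kappa L = m + 1
    \<and> 2 ^ m + 1 \<le> kappa (lrev L)"
proof -
  let ?\<delta> = "suffix_dfa m a b" and ?Q = "{..m}" and ?F = "{0}"
  let ?acc = "acc_states ?Q ?\<delta> ?F"
  have cl: "\<forall>q\<in>?Q. \<forall>x. ?\<delta> q x \<in> ?Q" using m by (auto simp: suffix_dfa_def Suc_leI)
  have reach: "\<forall>q\<in>?Q. \<exists>w. foldl ?\<delta> 0 w = q"
  proof
    fix q assume q: "q \<in> ?Q"
    show "\<exists>w. foldl ?\<delta> 0 w = q"
    proof (cases "q = 0")
      case True thus ?thesis by (intro exI[of _ "[]"]) simp
    next
      case False
      hence "foldl ?\<delta> 0 (c # replicate (q - 1) a) = q"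
        using q abc rot_reach[of m ?\<delta> a q] by (auto simp: suffix_dfa_def)
      thus ?thesis ..
    qed
  qed
  let ?\<S> = "insert {} (insert 0 ` Pow {1..m})"
  have "?\<S> \<subseteq> range ?acc"
  proof
    fix S assume "S \<in> ?\<S>"
    moreover have "?acc [c] = {}" using abc by (auto simp: acc_states_def suffix_dfa_def)
    moreover have "?acc [] \<union> R \<in> range ?acc" if "R \<subseteq> {1..m}" for R
      using suffix_dfa_hit[OF abc(1)] that
      by (intro acc_states_insert_all[where R = "{1..m}" and W = "hitw m a b", OF cl])
        (auto simp: acc_states_def)
    moreover have "?acc [] = {0}" by (auto simp: acc_states_def)
    ultimately show "S \<in> range ?acc" by (auto intro: range_eqI)
  qed
  moreover have "separates ?\<S> ?Q" by (rule separates_mono[OF separates_insert0_Pow]) auto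
  ultimately have "regular_lang (dfa_lang ?\<delta> 0 ?F) \<and> kappa (dfa_lang ?\<delta> 0 ?F) = card ?Q
      \<and> card ?\<S> \<le> kappa (lrev (dfa_lang ?\<delta> 0 ?F))"
    by (intro dfa_witness[OF _ _ cl _ reach]) auto
  moreover have "suffix_closed (dfa_lang ?\<delta> 0 ?F)"
    by (rule suffix_closed_dfa[where R = "\<lambda>p p'. p' = 0 \<or> p = p'"])
      (auto simp: suffix_dfa_def)
  ultimately show ?thesis using card_insert0_Pow[of m] by auto
qed

(* Factor witness: states 0..m+1, initial 0, final 0..m, sink m+1.  From 0 the letters a, b
   loop and c enters 1; on 1..m the letters act as in the suffix witness but with target m+1.
   This yields 2^m + 1 = 2^(n-2) + 1 reversed quotients. *)
definition factor_dfa :: "nat \<Rightarrow> 'a \<Rightarrow> 'a \<Rightarrow> nat \<Rightarrow> 'a \<Rightarrow> nat" where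
  "factor_dfa m a b q x =
    (if q = 0 then (if x = a \<or> x = b then 0 else 1)
     else if q \<le> m then
       (if x = a then Suc (q mod m) else if x = b then (if q = 1 then Suc m else q) else 1)
     else Suc m)"

lemma factor_dfa_hit:
  assumes "a \<noteq> b" "r \<in> {1..m}"
  shows "\<forall>q\<in>{..Suc m}. foldl (factor_dfa m a b) q (hitw m a b r) = (if q = r then Suc m else q)"
  by (rule hitw_action) (use assms in \<open>auto simp: factor_dfa_def\<close>)

(* The factor witness is prefix-closed (m + 1 is the only non-final state and a sink) and
   suffix-closed (state 0 simulates every state, up to the sink). *)
lemma wit_factor:
  fixes a b c :: "'a::finite"
  assumes abc: "a \<noteq> b" "a \<noteq> c" "b \<noteq> c" and m: "1 \<le> m"
  shows "\<exists>L :: 'a list set. regular_lang L \<and> factor_closed L \<and> kappa L = m + 2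
    \<and> 2 ^ m + 1 \<le> kappa (lrev L)"
proof -
  let ?\<delta> = "factor_dfa m a b" and ?Q = "{..Suc m}" and ?F = "{..m}"
  let ?acc = "acc_states ?Q ?\<delta> ?F"
  have cl: "\<forall>q\<in>?Q. \<forall>x. ?\<delta> q x \<in> ?Q" using m by (auto simp: factor_dfa_def Suc_leI)
  have kill: "foldl ?\<delta> q [c, b] = Suc m" if "q \<in> ?Q" for q
    using that abc m by (auto simp: factor_dfa_def)
  have reach: "\<forall>q\<in>?Q. \<exists>w. foldl ?\<delta> 0 w = q"
  proof
    fix q assume q: "q \<in> ?Q"
    consider "q = 0" | "q \<in> {1..m}" | "q = Suc m" using q by fastforce
    thus "\<exists>w. foldl ?\<delta> 0 w = q"
    proof cases
      case 1 thus ?thesis by (intro exI[of _ "[]"]) simp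
    next
      case 2
      hence "foldl ?\<delta> 0 (c # replicate (q - 1) a) = q"
        using abc rot_reach[of m ?\<delta> a q] by (auto simp: factor_dfa_def)
      thus ?thesis ..
    next
      case 3 thus ?thesis using kill[of 0] by blast
    qed
  qed
  have dead: "Suc m \<notin> ?acc u" for u
    using foldl_fixed[of u ?\<delta> "Suc m"] by (simp add: acc_states_def factor_dfa_def)
  let ?\<S> = "insert {} (insert 0 ` Pow {1..m})"
  have "?\<S> \<subseteq> range ?acc"
  proof
    fix S assume "S \<in> ?\<S>"
    moreover have "?acc [c, b] = {}" using kill by (auto simp: acc_states_def)
    moreover have "insert 0 R \<in> range ?acc" if R: "R \<subseteq> {1..m}" for R
    proof -
      have "?acc [] - ({1..m} - R) \<in> range ?acc"
        using factor_dfa_hit[OF abc(1)] dead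
        by (intro acc_states_remove_all[where R = "{1..m}" and W = "hitw m a b", OF cl]) auto
      moreover have "?acc [] - ({1..m} - R) = insert 0 R" using R by (auto simp: acc_states_def)
      ultimately show ?thesis by simp
    qed
    ultimately show "S \<in> range ?acc" by (auto intro: range_eqI)
  qed
  moreover have "separates ?\<S> ?Q" by (rule separates_mono[OF separates_insert0_Pow]) auto
  ultimately have "regular_lang (dfa_lang ?\<delta> 0 ?F) \<and> kappa (dfa_lang ?\<delta> 0 ?F) = card ?Q
      \<and> card ?\<S> \<le> kappa (lrev (dfa_lang ?\<delta> 0 ?F))"
    by (intro dfa_witness[OF _ _ cl _ reach]) auto
  moreover have "prefix_closed (dfa_lang ?\<delta> 0 ?F)"
    by (rule prefix_closed_dfa) (auto simp: factor_dfa_def)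
  moreover have "suffix_closed (dfa_lang ?\<delta> 0 ?F)"
    by (rule suffix_closed_dfa[where R = "\<lambda>p p'. p' = 0 \<or> p = p' \<or> p = Suc m"])
      (auto simp: factor_dfa_def)
  ultimately show ?thesis using card_insert0_Pow[of m] prefix_suffix_factor by auto
qed

(* Subword witness over 2m labelled letters, states 0..m+1, initial 0, final 0..m, sink m+1:
   from 0, the letter labelled i < m enters state i+1 and the letters labelled m..2m-1 loop; in
   state q those letters loop except the one labelled m + q - 1, which kills q.  Every letter
   either keeps a state or makes it worse, as subword-closure requires. *)
definition subword_dfa :: "nat \<Rightarrow> ('a \<Rightarrow> nat) \<Rightarrow> nat \<Rightarrow> 'a \<Rightarrow> nat" where
  "subword_dfa m lab q x =
    (if q = 0 then (if lab x < m then Suc (lab x) else if lab x < 2 * m then 0 else Suc m)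
     else if q \<le> m then (if m \<le> lab x \<and> lab x < 2 * m \<and> lab x - m + 1 \<noteq> q then q else Suc m)
     else Suc m)"

(* The subword witness: the letter labelled m + r - 1 removes r from any set acc_states u. *)
lemma wit_subword:
  fixes lab :: "'a::finite \<Rightarrow> nat"
  assumes labels: "{..<2 * m} \<subseteq> range lab"
  shows "\<exists>L :: 'a list set. regular_lang L \<and> subword_closed L \<and> kappa L = m + 2
    \<and> 2 ^ m + 1 \<le> kappa (lrev L)"
proof -
  let ?\<delta> = "subword_dfa m lab" and ?Q = "{..Suc m}" and ?F = "{..m}"
  let ?acc = "acc_states ?Q ?\<delta> ?F"
  define letter where "letter = inv lab"
  have letter: "lab (letter i) = i" if "i < 2 * m" for i
    using that labels unfolding letter_def by (intro f_inv_into_f) auto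
  have cl: "\<forall>q\<in>?Q. \<forall>x. ?\<delta> q x \<in> ?Q" by (auto simp: subword_dfa_def)
  have kill: "foldl ?\<delta> q [letter 0, letter 0] = Suc m" if "q \<in> ?Q" for q
    using that letter[of 0] by (cases "m = 0") (auto simp: subword_dfa_def)
  have hit: "\<forall>q\<in>?Q. foldl ?\<delta> q [letter (m + r - 1)] = (if q = r then Suc m else q)"
    if "r \<in> {1..m}" for r
  proof -
    have "lab (letter (m + r - 1)) = m + r - 1" using that by (intro letter) auto
    thus ?thesis using that by (auto simp: subword_dfa_def)
  qed
  have reach: "\<forall>q\<in>?Q. \<exists>w. foldl ?\<delta> 0 w = q"
  proof
    fix q assume q: "q \<in> ?Q"
    consider "q = 0" | "q \<in> {1..m}" | "q = Suc m" using q by fastforce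
    thus "\<exists>w. foldl ?\<delta> 0 w = q"
    proof cases
      case 1 thus ?thesis by (intro exI[of _ "[]"]) simp
    next
      case 2
      hence "foldl ?\<delta> 0 [letter (q - 1)] = q"
        using letter[of "q - 1"] by (auto simp: subword_dfa_def)
      thus ?thesis ..
    next
      case 3 thus ?thesis using kill[of 0] by blast
    qed
  qed
  have dead: "Suc m \<notin> ?acc u" for u
    using foldl_fixed[of u ?\<delta> "Suc m"] by (simp add: acc_states_def subword_dfa_def)
  let ?\<S> = "insert {} (insert 0 ` Pow {1..m})"
  have "?\<S> \<subseteq> range ?acc"
  proof
    fix S assume "S \<in> ?\<S>"
    moreover have "?acc [letter 0, letter 0] = {}" using kill by (auto simp: acc_states_def)
    moreover have "insert 0 R \<in> range ?acc" if R: "R \<subseteq> {1..m}" for R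
    proof -
      have "?acc [] - ({1..m} - R) \<in> range ?acc"
        using hit dead
        by (intro acc_states_remove_all[where R = "{1..m}" and W = "\<lambda>r. [letter (m + r - 1)]",
              OF cl]) auto
      moreover have "?acc [] - ({1..m} - R) = insert 0 R" using R by (auto simp: acc_states_def)
      ultimately show ?thesis by simp
    qed
    ultimately show "S \<in> range ?acc" by (auto intro: range_eqI)
  qed
  moreover have "separates ?\<S> ?Q" by (rule separates_mono[OF separates_insert0_Pow]) auto
  ultimately have "regular_lang (dfa_lang ?\<delta> 0 ?F) \<and> kappa (dfa_lang ?\<delta> 0 ?F) = card ?Q
      \<and> card ?\<S> \<le> kappa (lrev (dfa_lang ?\<delta> 0 ?F))"
    by (intro dfa_witness[OF _ _ cl _ reach]) auto
  moreover have "subword_closed (dfa_lang ?\<delta> 0 ?F)"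
    by (rule subword_closed_dfa[where R = "\<lambda>p p'. p = p' \<or> p = Suc m \<or> p' = 0"])
      (auto simp: subword_dfa_def)
  ultimately show ?thesis using card_insert0_Pow[of m] by auto
qed

lemma letters: "\<exists>h :: nat \<Rightarrow> 'a::finite. inj_on h {..<CARD('a)}"
proof -
  obtain h :: "nat \<Rightarrow> 'a" where "bij_betw h {0..<CARD('a)} UNIV"
    using ex_bij_betw_nat_finite[of "UNIV :: 'a set"] by auto
  hence "inj_on h {..<CARD('a)}" by (simp add: bij_betw_def atLeast0LessThan)
  thus ?thesis by blast
qed

lemma tight_prefix:
  assumes card: "2 \<le> CARD('a::finite)" and n: "2 \<le> n"
  shows "\<exists>L :: 'a list set. regular_lang L \<and> prefix_closed L \<and> kappa L = n
    \<and> kappa (lrev L) = 2 ^ (n - 1)"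
proof -
  obtain h :: "nat \<Rightarrow> 'a" where h: "inj_on h {..<CARD('a)}" using letters by blast
  have ab: "h 0 \<noteq> h 1" using card inj_onD[OF h, of 0 1] by auto
  have m: "1 \<le> n - 1" using n by simp
  obtain L :: "'a list set" where L: "regular_lang L" "prefix_closed L"
      "kappa L = n - 1 + 1" "2 ^ (n - 1) \<le> kappa (lrev L)"
    using wit_prefix[OF ab m] by blast
  hence "kappa L = n" using n by simp
  thus ?thesis using L ub_prefix[OF L(1) _ n L(2)] by (intro exI[of _ L]) (simp add: le_antisym)
qed

lemma tight_suffix:
  assumes card: "3 \<le> CARD('a::finite)" and n: "2 \<le> n"
  shows "\<exists>L :: 'a list set. regular_lang L \<and> suffix_closed L \<and> kappa L = n
    \<and> kappa (lrev L) = 2 ^ (n - 1) + 1"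
proof -
  obtain h :: "nat \<Rightarrow> 'a" where h: "inj_on h {..<CARD('a)}" using letters by blast
  have abc: "h 0 \<noteq> h 1" "h 0 \<noteq> h 2" "h 1 \<noteq> h 2" using card inj_onD[OF h] by fastforce+
  have m: "1 \<le> n - 1" using n by simp
  obtain L :: "'a list set" where L: "regular_lang L" "suffix_closed L"
      "kappa L = n - 1 + 1" "2 ^ (n - 1) + 1 \<le> kappa (lrev L)"
    using wit_suffix[OF abc m] by blast
  hence "kappa L = n" using n by simp
  thus ?thesis using L ub_suffix[OF L(1) _ L(2)] by (intro exI[of _ L]) (simp add: le_antisym)
qed

(* The subword witness only needs a labelling of the alphabet hitting 0..2(n-2)-1; for n = 2
   no letters at all are needed, which also settles the factor case n = 2. *)
lemma tight_subword_labels: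
  assumes "{..<2 * (n - 2)} \<subseteq> range (lab :: 'a::finite \<Rightarrow> nat)" and n: "2 \<le> n"
  shows "\<exists>L :: 'a list set. regular_lang L \<and> subword_closed L \<and> kappa L = n
    \<and> kappa (lrev L) = 2 ^ (n - 2) + 1"
proof -
  obtain L :: "'a list set" where L: "regular_lang L" "subword_closed L"
      "kappa L = n - 2 + 2" "2 ^ (n - 2) + 1 \<le> kappa (lrev L)"
    using wit_subword[OF assms(1)] by blast
  hence "kappa L = n" using n by simp
  thus ?thesis using L ub_factor[OF L(1) _ n subword_factor[OF L(2)]]
    by (intro exI[of _ L]) (simp add: le_antisym)
qed

lemma tight_subword:
  assumes n: "2 \<le> n" and card: "2 * n \<le> CARD('a::finite)"
  shows "\<exists>L :: 'a list set. regular_lang L \<and> subword_closed L \<and> kappa L = n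
    \<and> kappa (lrev L) = 2 ^ (n - 2) + 1"
proof -
  obtain h :: "nat \<Rightarrow> 'a" where h: "inj_on h {..<CARD('a)}" using letters by blast
  have "{..<2 * (n - 2)} \<subseteq> range (inv_into {..<CARD('a)} h)"
  proof
    fix k assume "k \<in> {..<2 * (n - 2)}"
    hence "inv_into {..<CARD('a)} h (h k) = k" using h card by (intro inv_into_f_f) auto
    thus "k \<in> range (inv_into {..<CARD('a)} h)" by (metis rangeI)
  qed
  thus ?thesis using n by (rule tight_subword_labels)
qed

(* Factor bound: the three-letter witness for n >= 3, the letterless subword witness for n = 2. *)
lemma tight_factor:
  assumes card: "3 \<le> CARD('a::finite)" and n: "2 \<le> n"
  shows "\<exists>L :: 'a list set. regular_lang L \<and> factor_closed L \<and> kappa L = n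
    \<and> kappa (lrev L) = 2 ^ (n - 2) + 1"
proof (cases "n = 2")
  case True
  hence "\<exists>L :: 'a list set. regular_lang L \<and> subword_closed L \<and> kappa L = n
      \<and> kappa (lrev L) = 2 ^ (n - 2) + 1"
    using tight_subword_labels[of n "\<lambda>_ :: 'a. 0"] by simp
  thus ?thesis using subword_factor by blast
next
  case False
  obtain h :: "nat \<Rightarrow> 'a" where h: "inj_on h {..<CARD('a)}" using letters by blast
  have abc: "h 0 \<noteq> h 1" "h 0 \<noteq> h 2" "h 1 \<noteq> h 2" using card inj_onD[OF h] by fastforce+
  have m: "1 \<le> n - 2" using n False by simp
  obtain L :: "'a list set" where L: "regular_lang L" "factor_closed L"
      "kappa L = n - 2 + 2" "2 ^ (n - 2) + 1 \<le> kappa (lrev L)"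
    using wit_factor[OF abc m] by blast
  hence "kappa L = n" using n by simp
  thus ?thesis using L ub_factor[OF L(1) _ n L(2)] by (intro exI[of _ L]) (simp add: le_antisym)
qed

theorem theorem5:
  shows
  "(\<forall>L :: ('a::finite) list set. regular_lang L \<and> kappa L = 1 \<and>
      (prefix_closed L \<or> suffix_closed L \<or> factor_closed L \<or> subword_closed L)
      \<longrightarrow> kappa (lrev L) = 1)
 \<and> (\<forall>(L :: 'a list set) n. regular_lang L \<and> kappa L = n \<and> n \<ge> 2 \<and> prefix_closed L
      \<longrightarrow> kappa (lrev L) \<le> 2 ^ (n - 1))
 \<and> (CARD('a) \<ge> 2 \<longrightarrow> (\<forall>n\<ge>2. \<exists>L :: 'a list set. regular_lang L \<and> prefix_closed L \<and>
      kappa L = n \<and> kappa (lrev L) = 2 ^ (n - 1)))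
 \<and> (\<forall>(L :: 'a list set) n. regular_lang L \<and> kappa L = n \<and> n \<ge> 2 \<and> suffix_closed L
      \<longrightarrow> kappa (lrev L) \<le> 2 ^ (n - 1) + 1)
 \<and> (CARD('a) \<ge> 3 \<longrightarrow> (\<forall>n\<ge>2. \<exists>L :: 'a list set. regular_lang L \<and> suffix_closed L \<and>
      kappa L = n \<and> kappa (lrev L) = 2 ^ (n - 1) + 1))
 \<and> (\<forall>(L :: 'a list set) n. regular_lang L \<and> kappa L = n \<and> n \<ge> 2 \<and> factor_closed L
      \<longrightarrow> kappa (lrev L) \<le> 2 ^ (n - 2) + 1)
 \<and> (CARD('a) \<ge> 3 \<longrightarrow> (\<forall>n\<ge>2. \<exists>L :: 'a list set. regular_lang L \<and> factor_closed L \<and>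
      kappa L = n \<and> kappa (lrev L) = 2 ^ (n - 2) + 1))
 \<and> (\<forall>(L :: 'a list set) n. regular_lang L \<and> kappa L = n \<and> n \<ge> 2 \<and> subword_closed L
      \<longrightarrow> kappa (lrev L) \<le> 2 ^ (n - 2) + 1)
 \<and> (\<forall>n\<ge>2. CARD('a) \<ge> 2 * n \<longrightarrow> (\<exists>L :: 'a list set. regular_lang L \<and> subword_closed L \<and>
      kappa L = n \<and> kappa (lrev L) = 2 ^ (n - 2) + 1))"
proof (intro conjI allI impI; (elim conjE)?)
qed (use kappa_one_rev ub_prefix ub_suffix ub_factor subword_factor
      tight_prefix tight_suffix tight_factor tight_subword in blast)+

end
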